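(* Let $\Pi$ be a Klein tableau with entries at most $2$, encoded as $\Pi=[\gamma;\zeta=\beta^0;\beta^1,\ldots,\beta^s=\beta]$. Define $$x(\Pi)=\sum_j\big(\bar\zeta_j-\bar\gamma_j+|\beta^{j-1}|-|\beta^j|\big)\sum_{k>j}\big(\bar\beta^{j-1}_k-\bar\zeta_k\big)+\sum_j\sum_{\ell>j}\big(\bar\beta^j_{\ell+1}-\bar\beta^{j-1}_{\ell+1}\big)\sum_{k=j+1}^{\ell}\big(\bar\beta^{j-1}_k-\bar\zeta_k\big).$$ Then $x(\Pi)$ equals the number $x(\Delta)$ of crossings in the arc diagram $\Delta$ of $\Pi$.
   Context: For a partition $\lambda$ the Young diagram has columns of lengths $\lambda_1,\lambda_2,\ldots$; rows numbered from the top starting at $1$; $\bar\lambda$ is the conjugate partition so $\bar\lambda_k$ is the number of boxes in row $k$; $|\lambda|=\sum_i\lambda_i$. An LR-tableau of type $(\alpha,\beta,\gamma)$ with entries at most $2$ is a filling of the skew diagram $\beta\setminus\gamma$ with $\bar\alpha_1$ entries $1$ and $\bar\alpha_2$ entries $2$, weakly increasing along rows, strictly increasing down columns, and such that for each $c\ge0$ the number of entries $2$ in columns to the right of column $c$ is at most the number of entries $1$ there. A Klein tableau is such an LR-tableau in which each entry $2$ carries a subscript $r$ ($2_r$) with: (a) if $2_r$ is in row $m$ then $1\le r\le m-1$; (b) if $2_r$ is in row $m$ and the box above it contains $1$ then $r=m-1$; (c) the number of entries $2_r$ is at most the number of entries $1$ in row $r$. The encoding $[\gamma;\zeta;\beta^1,\dots,\beta^s]$: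 $\gamma$ is the shape of the empty boxes, $\zeta=\beta^0$ the shape formed by the empty boxes and the boxes $1$, and $\beta^j$ the shape formed by the empty boxes, the boxes $1$ and the boxes $2_i$ with $i\le j$. The arc diagram $\Delta$ of $\Pi$ is the multiset consisting of an arc $(m,r)$ for each entry $2_r$ in row $m$, together with, at each position $r$, as many poles as the number of entries $1$ in row $r$ minus the number of arcs ending at $r$. The number of crossings $x(\Delta)$ is the number (with multiplicity) of pairs of arcs $(m,r),(n,s)$ with $m>n>r>s$ plus the number of pairs (arc $(m,s)$, pole at $r$) with $m>r>s$. *)

theory Defs
  imports "HOL-Library.Multiset"
begin

text \<open>Partitions are lists of column lengths [lambda_1, lambda_2, ...] (weakly decreasing).
Boxes are pairs (m, c): row m >= 1 (numbered from the top), column c >= 1.\<close>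

definition is_partition :: "nat list \<Rightarrow> bool" where
  "is_partition lam \<longleftrightarrow> sorted_wrt (\<ge>) lam"

definition diagram :: "nat list \<Rightarrow> (nat \<times> nat) set" where
  "diagram lam = {(m, c). 1 \<le> c \<and> c \<le> length lam \<and> 1 \<le> m \<and> m \<le> lam ! (c - 1)}"

text \<open>Number of boxes in row k of a shape (a set of boxes): the conjugate partition entry.\<close>
definition rowlen :: "(nat \<times> nat) set \<Rightarrow> nat \<Rightarrow> nat" where
  "rowlen D k = card {c. (k, c) \<in> D}"

definition nrows :: "(nat \<times> nat) set \<Rightarrow> nat" where
  "nrows D = Max (insert 0 (fst ` D))"

datatype entry = One | Two nat

fun val :: "entry \<Rightarrow> nat" where
  "val One = 1"
| "val (Two r) = 2"

fun is_two :: "entry \<Rightarrow> bool" where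
  "is_two One = False"
| "is_two (Two r) = True"

fun sub :: "entry \<Rightarrow> nat" where
  "sub One = 0"
| "sub (Two r) = r"

definition skew :: "nat list \<Rightarrow> nat list \<Rightarrow> (nat \<times> nat) set" where
  "skew beta gamma = diagram beta - diagram gamma"

text \<open>LR-tableau with entries at most 2 on the skew shape beta minus gamma; the filling T is
given as a function of (row, column), only its values on the skew boxes matter.
(The type alpha is determined by the numbers of entries 1 and 2.)\<close>
definition lr_tableau :: "nat list \<Rightarrow> nat list \<Rightarrow> (nat \<Rightarrow> nat \<Rightarrow> entry) \<Rightarrow> bool" where
  "lr_tableau beta gamma T \<longleftrightarrow>
     is_partition beta \<and> is_partition gamma \<and> diagram gamma \<subseteq> diagram beta \<and>
     (\<forall>m c c'. (m, c) \<in> skew beta gamma \<and> (m, c') \<in> skew beta gamma \<and> c < c'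
        \<longrightarrow> val (T m c) \<le> val (T m c')) \<and>
     (\<forall>m m' c. (m, c) \<in> skew beta gamma \<and> (m', c) \<in> skew beta gamma \<and> m < m'
        \<longrightarrow> val (T m c) < val (T m' c)) \<and>
     (\<forall>c0. card {(m, c). (m, c) \<in> skew beta gamma \<and> c > c0 \<and> is_two (T m c)}
           \<le> card {(m, c). (m, c) \<in> skew beta gamma \<and> c > c0 \<and> T m c = One})"

definition ones_in_row :: "nat list \<Rightarrow> nat list \<Rightarrow> (nat \<Rightarrow> nat \<Rightarrow> entry) \<Rightarrow> nat \<Rightarrow> nat" where
  "ones_in_row beta gamma T r = card {c. (r, c) \<in> skew beta gamma \<and> T r c = One}"

definition num_twos_sub :: "nat list \<Rightarrow> nat list \<Rightarrow> (nat \<Rightarrow> nat \<Rightarrow> entry) \<Rightarrow> nat \<Rightarrow> nat" where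
  "num_twos_sub beta gamma T r = card {(m, c). (m, c) \<in> skew beta gamma \<and> T m c = Two r}"

definition klein_tableau :: "nat list \<Rightarrow> nat list \<Rightarrow> (nat \<Rightarrow> nat \<Rightarrow> entry) \<Rightarrow> bool" where
  "klein_tableau beta gamma T \<longleftrightarrow>
     lr_tableau beta gamma T \<and>
     (\<forall>m c r. (m, c) \<in> skew beta gamma \<and> T m c = Two r \<longrightarrow> 1 \<le> r \<and> r \<le> m - 1) \<and>
     (\<forall>m c r. (m, c) \<in> skew beta gamma \<and> T m c = Two r \<and>
        (m - 1, c) \<in> skew beta gamma \<and> T (m - 1) c = One \<longrightarrow> r = m - 1) \<and>
     (\<forall>r. num_twos_sub beta gamma T r \<le> ones_in_row beta gamma T r)"

text \<open>The encoding [gamma; zeta = beta^0; beta^1, ..., beta^s = beta] as shapes (box sets).\<close>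
definition zeta_shape :: "nat list \<Rightarrow> nat list \<Rightarrow> (nat \<Rightarrow> nat \<Rightarrow> entry) \<Rightarrow> (nat \<times> nat) set" where
  "zeta_shape beta gamma T = diagram gamma \<union> {(m, c). (m, c) \<in> skew beta gamma \<and> T m c = One}"

definition beta_shape :: "nat list \<Rightarrow> nat list \<Rightarrow> (nat \<Rightarrow> nat \<Rightarrow> entry) \<Rightarrow> nat \<Rightarrow> (nat \<times> nat) set" where
  "beta_shape beta gamma T j = zeta_shape beta gamma T \<union>
     {(m, c). (m, c) \<in> skew beta gamma \<and> (\<exists>i. 1 \<le> i \<and> i \<le> j \<and> T m c = Two i)}"

text \<open>x(Pi). The sums over j, k, l run over all positive indices; all terms vanish beyond the
number of rows of beta, so they are truncated there.\<close>
definition x_Pi :: "nat list \<Rightarrow> nat list \<Rightarrow> (nat \<Rightarrow> nat \<Rightarrow> entry) \<Rightarrow> int" where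
  "x_Pi beta gamma T =
    (let N = nrows (diagram beta);
         g = diagram gamma; z = zeta_shape beta gamma T; b = beta_shape beta gamma T
     in (\<Sum>j\<in>{1..N}.
           (int (rowlen z j) - int (rowlen g j) + int (card (b (j - 1))) - int (card (b j)))
           * (\<Sum>k\<in>{j+1..N}. int (rowlen (b (j - 1)) k) - int (rowlen z k)))
      + (\<Sum>j\<in>{1..N}. \<Sum>l\<in>{j+1..N}.
           (int (rowlen (b j) (l + 1)) - int (rowlen (b (j - 1)) (l + 1)))
           * (\<Sum>k\<in>{j+1..l}. int (rowlen (b (j - 1)) k) - int (rowlen z k))))"

datatype item = Arc nat nat | Pole nat

definition arc_diagram :: "nat list \<Rightarrow> nat list \<Rightarrow> (nat \<Rightarrow> nat \<Rightarrow> entry) \<Rightarrow> item multiset" where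
  "arc_diagram beta gamma T =
     image_mset (\<lambda>(m, c). Arc m (sub (T m c)))
       (mset_set {(m, c). (m, c) \<in> skew beta gamma \<and> is_two (T m c)})
   + (\<Sum>r\<in>{1..nrows (diagram beta)}.
        replicate_mset (ones_in_row beta gamma T r - num_twos_sub beta gamma T r) (Pole r))"

fun crosses :: "item \<Rightarrow> item \<Rightarrow> bool" where
  "crosses (Arc m r) (Arc n s) \<longleftrightarrow> m > n \<and> n > r \<and> r > s"
| "crosses (Arc m s) (Pole r) \<longleftrightarrow> m > r \<and> r > s"
| "crosses _ _ \<longleftrightarrow> False"

definition x_Delta :: "item multiset \<Rightarrow> nat" where
  "x_Delta D = (\<Sum>a\<in>set_mset D. \<Sum>b\<in>set_mset D.
                  if crosses a b then count D a * count D b else 0)"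

end

theory Submission
  imports Defs
begin

text \<open>Both sides are sums over the boxes carrying an entry \<open>2\<^sub>r\<close>, i.e. over the arcs \<open>(m, r)\<close>
of \<open>\<Delta>\<close>. The excess of row \<open>k\<close> of \<open>\<beta>\<^sup>i\<close> over row \<open>k\<close> of \<open>\<zeta>\<close> counts the arcs starting in
row \<open>k\<close> with subscript at most \<open>i\<close>. Hence in the first sum of \<open>x(\<Pi>)\<close> the coefficient is the
number of poles at \<open>j\<close> and the \<open>k\<close>-sum counts the arcs passing over \<open>j\<close>: these are the
arc--pole crossings. In the second sum the \<open>l\<close>-th factor counts the arcs \<open>(l + 1, j)\<close> and the
\<open>k\<close>-sum the arcs \<open>(n, s)\<close> with \<open>j < n \<le> l\<close> and \<open>s < j\<close>: these are the arc--arc crossings.\<close>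

lemma sum_mset_multiplicity:
  "(\<Sum>x\<in>#M. f x) = (\<Sum>x\<in>set_mset M. of_nat (count M x) * (f x :: 'b::comm_semiring_1))"
proof -
  have "(\<Sum>x\<in>#M. f x) = (\<Sum>x\<in>#M. \<Sum>y\<in>set_mset M. if x = y then f y else 0)"
    by (intro arg_cong[where f = sum_mset] image_mset_cong) simp
  also have "\<dots> = (\<Sum>y\<in>set_mset M. \<Sum>x\<in>#M. if x = y then f y else 0)"
    unfolding sum_unfold_sum_mset by (rule sum_mset.swap)
  also have "\<dots> = (\<Sum>y\<in>set_mset M. of_nat (count M y) * f y)"
    by (simp add: sum_mset_delta mult.commute)
  finally show ?thesis .
qed

lemma x_Delta_eq_sum_mset: "x_Delta D = (\<Sum>a\<in>#D. \<Sum>b\<in>#D. of_bool (crosses a b))"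
  unfolding x_Delta_def sum_mset_multiplicity by (simp add: sum_distrib_left sum.If_cases Int_def)

lemma sum_mset_sum_replicate:
  "(\<Sum>x\<in>#(\<Sum>r\<in>R. replicate_mset (n r) (a r)). f x) = (\<Sum>r\<in>R. of_nat (n r) * f (a r))"
  by (induction R rule: infinite_finite_induct) auto

lemma sum_of_bool_point:
  assumes "finite K"
  shows "(\<Sum>k\<in>K. of_bool (k = x \<and> P k) :: 'a::comm_semiring_1) = of_bool (x \<in> K \<and> P x)"
proof -
  have "(\<Sum>k\<in>K. of_bool (k = x \<and> P k) :: 'a) = (\<Sum>k\<in>K. if k = x then of_bool (P x) else 0)"
    by (intro sum.cong) auto
  then show ?thesis using assms by simp
qed

lemma sum_sum_of_bool_crossing:
  fixes m r n s N :: nat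
  assumes "1 \<le> r" "r < m" "m \<le> N"
  shows "(\<Sum>j\<in>{1..N}. \<Sum>l\<in>{j+1..N}. of_bool (m = l + 1 \<and> r = j) * of_bool (n \<in> {j+1..l} \<and> s < j))
       = (of_bool (n < m \<and> r < n \<and> s < r) :: 'a::comm_semiring_1)"
proof -
  have "(\<Sum>l\<in>{j+1..N}. of_bool (m = l + 1 \<and> r = j) * of_bool (n \<in> {j+1..l} \<and> s < j))
      = (of_bool (j = r \<and> m - 1 \<in> {j+1..N} \<and> n \<in> {j+1..m - 1} \<and> s < j) :: 'a)" for j
  proof -
    have "(\<Sum>l\<in>{j+1..N}. of_bool (m = l + 1 \<and> r = j) * of_bool (n \<in> {j+1..l} \<and> s < j))
        = (\<Sum>l\<in>{j+1..N}. of_bool (l = m - 1 \<and> r = j \<and> n \<in> {j+1..l} \<and> s < j) :: 'a)"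
      using assms by (intro sum.cong refl) auto
    also have "\<dots> = of_bool (j = r \<and> m - 1 \<in> {j+1..N} \<and> n \<in> {j+1..m - 1} \<and> s < j)"
      by (subst sum_of_bool_point) auto
    finally show ?thesis .
  qed
  then have "(\<Sum>j\<in>{1..N}. \<Sum>l\<in>{j+1..N}. of_bool (m = l + 1 \<and> r = j) * of_bool (n \<in> {j+1..l} \<and> s < j))
      = (\<Sum>j\<in>{1..N}. of_bool (j = r \<and> m - 1 \<in> {j+1..N} \<and> n \<in> {j+1..m - 1} \<and> s < j) :: 'a)"
    by simp
  also have "\<dots> = of_bool (n < m \<and> r < n \<and> s < r)"
    using assms by (subst sum_of_bool_point) auto
  finally show ?thesis .
qed

lemma finite_diagram: "finite (diagram lam)"
proof (rule finite_subset)
  show "diagram lam \<subseteq> {..Max (insert 0 (set lam))} \<times> {..length lam}"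
    by (auto simp: diagram_def intro!: le_trans[OF _ Max_ge] nth_mem)
qed simp

lemma row_le_nrows: "(m, c) \<in> diagram lam \<Longrightarrow> m \<le> nrows (diagram lam)"
  unfolding nrows_def using finite_diagram by (simp add: rev_image_eqI)

lemma rowlen_eq_card: "rowlen D k = card {p \<in> D. fst p = k}"
proof -
  have "{p \<in> D. fst p = k} = Pair k ` {c. (k, c) \<in> D}" by force
  then show ?thesis by (simp add: rowlen_def card_image inj_on_def)
qed

lemma rowlen_Un_disjoint:
  "finite X \<Longrightarrow> finite Y \<Longrightarrow> X \<inter> Y = {} \<Longrightarrow> rowlen (X \<union> Y) k = rowlen X k + rowlen Y k"
  unfolding rowlen_eq_card by (subst card_Un_disjoint[symmetric]) (auto intro: arg_cong[where f = card])

lemma finite_skew: "finite (skew beta gamma)"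
  unfolding skew_def using finite_diagram by blast

definition two_boxes :: "nat list \<Rightarrow> nat list \<Rightarrow> (nat \<Rightarrow> nat \<Rightarrow> entry) \<Rightarrow> (nat \<times> nat) set" where
  "two_boxes beta gamma T = {(m, c). (m, c) \<in> skew beta gamma \<and> is_two (T m c)}"

locale filling =
  fixes beta gamma :: "nat list" and T :: "nat \<Rightarrow> nat \<Rightarrow> entry"
begin

abbreviation "N \<equiv> nrows (diagram beta)"
abbreviation "zeta \<equiv> zeta_shape beta gamma T"
abbreviation "Beta \<equiv> beta_shape beta gamma T"
abbreviation "twos \<equiv> two_boxes beta gamma T"
abbreviation "subscript p \<equiv> sub (T (fst p) (snd p))"
abbreviation "poles r \<equiv> ones_in_row beta gamma T r - num_twos_sub beta gamma T r"

lemma finite_twos: "finite twos"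
  unfolding two_boxes_def by (rule finite_subset[OF _ finite_skew]) auto

lemma row_le_N: "p \<in> twos \<Longrightarrow> fst p \<le> N"
  by (auto simp: two_boxes_def skew_def intro: row_le_nrows)

lemma x_Delta_arc_diagram:
  "x_Delta (arc_diagram beta gamma T) =
     (\<Sum>p\<in>twos. \<Sum>q\<in>twos. of_bool (crosses (Arc (fst p) (subscript p)) (Arc (fst q) (subscript q))))
   + (\<Sum>p\<in>twos. \<Sum>r\<in>{1..N}. poles r * of_bool (crosses (Arc (fst p) (subscript p)) (Pole r)))"
proof -
  define arcs where "arcs = image_mset (\<lambda>p. Arc (fst p) (subscript p)) (mset_set twos)"
  define pls where "pls = (\<Sum>r\<in>{1..N}. replicate_mset (poles r) (Pole r))"
  have "arc_diagram beta gamma T = arcs + pls"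
    unfolding arc_diagram_def arcs_def pls_def two_boxes_def by (simp add: case_prod_beta')
  moreover have "(\<Sum>b\<in>#pls. f b) = (\<Sum>r\<in>{1..N}. poles r * f (Pole r))" for f :: "item \<Rightarrow> nat"
    unfolding pls_def by (simp add: sum_mset_sum_replicate)
  moreover have "(\<Sum>b\<in>#arcs. f b) = (\<Sum>p\<in>twos. f (Arc (fst p) (subscript p)))" for f :: "item \<Rightarrow> nat"
    unfolding arcs_def by (simp add: sum_unfold_sum_mset image_mset.compositionality comp_def)
  ultimately show ?thesis
    by (simp add: x_Delta_eq_sum_mset sum.distrib)
qed

lemma rowlen_zeta: "rowlen zeta k = rowlen (diagram gamma) k + ones_in_row beta gamma T k"
proof -
  have "rowlen zeta k = rowlen (diagram gamma) k + rowlen {(m, c). (m, c) \<in> skew beta gamma \<and> T m c = One} k"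
    unfolding zeta_shape_def
    by (rule rowlen_Un_disjoint) (auto simp: skew_def finite_diagram intro: finite_subset[OF _ finite_skew])
  then show ?thesis by (simp add: rowlen_def ones_in_row_def)
qed

lemma finite_zeta: "finite zeta"
  unfolding zeta_shape_def using finite_diagram finite_skew by (auto intro: finite_subset)

lemma zeta_Int_twos: "zeta \<inter> twos = {}"
  by (auto simp: zeta_shape_def two_boxes_def skew_def)

lemma num_twos_sub_eq_card: "num_twos_sub beta gamma T r = card {p \<in> twos. subscript p = r}"
  unfolding num_twos_sub_def two_boxes_def
  by (rule arg_cong[where f = card]) (auto elim: is_two.elims)

end

locale klein_filling = filling +
  assumes klein: "klein_tableau beta gamma T"
begin

lemma subscript_bounds:
  assumes "p \<in> twos" shows "1 \<le> subscript p" "subscript p < fst p"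
proof -
  obtain m c r where "p = (m, c)" "(m, c) \<in> skew beta gamma" "T m c = Two r"
    using assms by (auto simp: two_boxes_def elim: is_two.elims)
  with klein show "1 \<le> subscript p" "subscript p < fst p"
    unfolding klein_tableau_def by fastforce+
qed

lemma int_poles: "int (poles r) = int (ones_in_row beta gamma T r) - int (num_twos_sub beta gamma T r)"
  using klein by (simp add: klein_tableau_def of_nat_diff)

lemma Beta_eq: "Beta i = zeta \<union> {p \<in> twos. subscript p \<le> i}"
proof -
  have "{(m, c). (m, c) \<in> skew beta gamma \<and> (\<exists>t. 1 \<le> t \<and> t \<le> i \<and> T m c = Two t)}
      = {p \<in> twos. subscript p \<le> i}"
    using subscript_bounds(1) by (auto simp: two_boxes_def elim!: is_two.elims) (metis is_two.simps(2) sub.simps(2))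
  then show ?thesis by (simp add: beta_shape_def)
qed

lemma rowlen_Beta:
  "int (rowlen (Beta i) k) - int (rowlen zeta k) = (\<Sum>p\<in>twos. of_bool (fst p = k \<and> subscript p \<le> i))"
proof -
  have "rowlen (Beta i) k = rowlen zeta k + rowlen {p \<in> twos. subscript p \<le> i} k"
    unfolding Beta_eq using finite_zeta finite_twos zeta_Int_twos by (intro rowlen_Un_disjoint) auto
  then show ?thesis
    using finite_twos by (simp add: rowlen_eq_card Int_def conj_ac)
qed

lemma card_Beta_Suc: "card (Beta (Suc j)) = card (Beta j) + num_twos_sub beta gamma T (Suc j)"
proof -
  have "Beta (Suc j) = Beta j \<union> {p \<in> twos. subscript p = Suc j}"
    unfolding Beta_eq by auto
  moreover have "Beta j \<inter> {p \<in> twos. subscript p = Suc j} = {}"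
    unfolding Beta_eq using zeta_Int_twos by auto
  moreover have "finite (Beta j)"
    unfolding Beta_eq using finite_zeta finite_twos by simp
  ultimately show ?thesis
    using finite_twos by (simp add: card_Un_disjoint num_twos_sub_eq_card)
qed

lemma sum_rowlen_Beta_pred:
  assumes "1 \<le> j"
  shows "(\<Sum>k\<in>{j+1..l}. int (rowlen (Beta (j - 1)) k) - int (rowlen zeta k))
       = (\<Sum>p\<in>twos. of_bool (fst p \<in> {j+1..l} \<and> subscript p < j))"
proof -
  have "(\<Sum>k\<in>{j+1..l}. int (rowlen (Beta (j - 1)) k) - int (rowlen zeta k))
      = (\<Sum>k\<in>{j+1..l}. \<Sum>p\<in>twos. of_bool (k = fst p \<and> subscript p < j))"
    unfolding rowlen_Beta using assms by (intro sum.cong refl arg_cong[where f = of_bool]) auto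
  also have "\<dots> = (\<Sum>p\<in>twos. \<Sum>k\<in>{j+1..l}. of_bool (k = fst p \<and> subscript p < j))"
    by (rule sum.swap)
  also have "\<dots> = (\<Sum>p\<in>twos. of_bool (fst p \<in> {j+1..l} \<and> subscript p < j))"
    by (simp only: sum_of_bool_point finite_atLeastAtMost)
  finally show ?thesis .
qed

lemma pole_term:
  "(\<Sum>j\<in>{1..N}. (int (rowlen zeta j) - int (rowlen (diagram gamma) j) + int (card (Beta (j - 1)))
        - int (card (Beta j))) * (\<Sum>k\<in>{j+1..N}. int (rowlen (Beta (j - 1)) k) - int (rowlen zeta k)))
   = (\<Sum>p\<in>twos. \<Sum>r\<in>{1..N}. int (poles r) * of_bool (r < fst p \<and> subscript p < r))"
proof -
  have "int (rowlen zeta j) - int (rowlen (diagram gamma) j) + int (card (Beta (j - 1))) - int (card (Beta j))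
      = int (poles j)" if "1 \<le> j" for j
    using that rowlen_zeta[of j] card_Beta_Suc[of "j - 1"] int_poles[of j] by simp
  moreover have "(\<Sum>k\<in>{j+1..N}. int (rowlen (Beta (j - 1)) k) - int (rowlen zeta k))
      = (\<Sum>p\<in>twos. of_bool (j < fst p \<and> subscript p < j))" if "1 \<le> j" for j
    unfolding sum_rowlen_Beta_pred[OF that] using row_le_N
    by (intro sum.cong refl arg_cong[where f = of_bool]) fastforce
  ultimately have "(\<Sum>j\<in>{1..N}. (int (rowlen zeta j) - int (rowlen (diagram gamma) j)
        + int (card (Beta (j - 1))) - int (card (Beta j)))
        * (\<Sum>k\<in>{j+1..N}. int (rowlen (Beta (j - 1)) k) - int (rowlen zeta k)))
      = (\<Sum>j\<in>{1..N}. \<Sum>p\<in>twos. int (poles j) * of_bool (j < fst p \<and> subscript p < j))"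
    by (simp add: sum_distrib_left del: sum_mult_of_bool_eq)
  also have "\<dots> = (\<Sum>p\<in>twos. \<Sum>r\<in>{1..N}. int (poles r) * of_bool (r < fst p \<and> subscript p < r))"
    by (rule sum.swap)
  finally show ?thesis .
qed

lemma arc_term:
  "(\<Sum>j\<in>{1..N}. \<Sum>l\<in>{j+1..N}. (int (rowlen (Beta j) (l + 1)) - int (rowlen (Beta (j - 1)) (l + 1)))
        * (\<Sum>k\<in>{j+1..l}. int (rowlen (Beta (j - 1)) k) - int (rowlen zeta k)))
   = (\<Sum>p\<in>twos. \<Sum>q\<in>twos. of_bool (fst q < fst p \<and> subscript p < fst q \<and> subscript q < subscript p))"
proof -
  have "int (rowlen (Beta j) (l + 1)) - int (rowlen (Beta (j - 1)) (l + 1))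
      = (\<Sum>p\<in>twos. of_bool (fst p = l + 1 \<and> subscript p = j))" if "1 \<le> j" for j l
  proof -
    have "int (rowlen (Beta j) (l + 1)) - int (rowlen (Beta (j - 1)) (l + 1))
        = (int (rowlen (Beta j) (l + 1)) - int (rowlen zeta (l + 1)))
          - (int (rowlen (Beta (j - 1)) (l + 1)) - int (rowlen zeta (l + 1)))"
      by simp
    also have "\<dots> = (\<Sum>p\<in>twos. of_bool (fst p = l + 1 \<and> subscript p \<le> j)
                                 - of_bool (fst p = l + 1 \<and> subscript p \<le> j - 1))"
      unfolding rowlen_Beta by (simp only: sum_subtractf)
    also have "\<dots> = (\<Sum>p\<in>twos. of_bool (fst p = l + 1 \<and> subscript p = j))"
      using that by (intro sum.cong refl) auto
    finally show ?thesis .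
  qed
  then have "(int (rowlen (Beta j) (l + 1)) - int (rowlen (Beta (j - 1)) (l + 1)))
        * (\<Sum>k\<in>{j+1..l}. int (rowlen (Beta (j - 1)) k) - int (rowlen zeta k))
      = (\<Sum>p\<in>twos. \<Sum>q\<in>twos.
           of_bool (fst p = l + 1 \<and> subscript p = j) * of_bool (fst q \<in> {j+1..l} \<and> subscript q < j))"
    if "1 \<le> j" for j l
    using that by (simp only: sum_rowlen_Beta_pred sum_product)
  then have "(\<Sum>j\<in>{1..N}. \<Sum>l\<in>{j+1..N}. (int (rowlen (Beta j) (l + 1)) - int (rowlen (Beta (j - 1)) (l + 1)))
        * (\<Sum>k\<in>{j+1..l}. int (rowlen (Beta (j - 1)) k) - int (rowlen zeta k)))
      = (\<Sum>j\<in>{1..N}. \<Sum>l\<in>{j+1..N}. \<Sum>p\<in>twos. \<Sum>q\<in>twos.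
           of_bool (fst p = l + 1 \<and> subscript p = j) * of_bool (fst q \<in> {j+1..l} \<and> subscript q < j))"
    by (intro sum.cong refl) simp
  also have "\<dots> = (\<Sum>p\<in>twos. \<Sum>q\<in>twos. \<Sum>j\<in>{1..N}. \<Sum>l\<in>{j+1..N}.
           of_bool (fst p = l + 1 \<and> subscript p = j) * of_bool (fst q \<in> {j+1..l} \<and> subscript q < j))"
    by (subst sum.swap, subst sum.swap, simp add: sum.swap[of _ "{_..N}"])
  also have "\<dots> = (\<Sum>p\<in>twos. \<Sum>q\<in>twos. of_bool (fst q < fst p \<and> subscript p < fst q \<and> subscript q < subscript p))"
    using subscript_bounds row_le_N by (intro sum.cong refl sum_sum_of_bool_crossing) auto
  finally show ?thesis .
qed

end

theorem lemma2p3: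
  fixes beta gamma :: "nat list" and T :: "nat \<Rightarrow> nat \<Rightarrow> entry"
  assumes "klein_tableau beta gamma T"
  shows "x_Pi beta gamma T = int (x_Delta (arc_diagram beta gamma T))"
proof -
  interpret klein_filling beta gamma T
    using assms by unfold_locales
  have "x_Pi beta gamma T
      = (\<Sum>p\<in>twos. \<Sum>r\<in>{1..N}. int (poles r) * of_bool (r < fst p \<and> subscript p < r))
      + (\<Sum>p\<in>twos. \<Sum>q\<in>twos. of_bool (fst q < fst p \<and> subscript p < fst q \<and> subscript q < subscript p))"
    unfolding x_Pi_def Let_def pole_term arc_term ..
  also have "\<dots> = int (x_Delta (arc_diagram beta gamma T))"
    unfolding x_Delta_arc_diagram by (simp add: of_nat_sum conj_commute del: sum_mult_of_bool_eq sum_of_bool_eq)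
  finally show ?thesis .
qed

end
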